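(* Let $\theta$ be a comtrace alphabet. For all $D_1,D_2\in\mathsf{CDG}(\theta)$, the composition $D_1\circledcirc D_2$ is a cd-graph over $\theta$, i.e. $D_1\circledcirc D_2\in\mathsf{CDG}(\theta)$.
   Context: So-structures: $(X,\prec,\sqsubset)$ with (S1) $\neg(\alpha\sqsubset\alpha)$; (S2) $\alpha\prec\beta\Rightarrow\alpha\sqsubset\beta$; (S3) $\alpha\sqsubset\beta\sqsubset\gamma\wedge\alpha\neq\gamma\Rightarrow\alpha\sqsubset\gamma$; (S4) $(\alpha\sqsubset\beta\prec\gamma)\vee(\alpha\prec\beta\sqsubset\gamma)\Rightarrow\alpha\prec\gamma$. $\lozenge$-closure: $(X,R_1,R_2)^\lozenge:=(X,(R_1\cup R_2)^*\circ R_1\circ(R_1\cup R_2)^*,(R_1\cup R_2)^*\setminus\mathrm{id}_X)$ ($^*$ = reflexive transitive closure). Labeled relational structures are taken up to label-preserving isomorphism; $[\cdot]$ denotes the class. Comtrace alphabet: $\theta=(E,sim,ser)$, $E$ finite, $ser\subseteq sim\subseteq E\times E$, $sim$ irreflexive symmetric. Cd-graph over $\theta$: the class of a finite labeled relational structure $(X,\to,\dashrightarrow,\lambda)$, $\lambda:X\to E$, with $\to,\dashrightarrow$ irreflexive, $(X,\to,\dashrightarrow)^\lozenge$ an so-structure, and for all $\alpha\neq\beta$: (CD1) $(\lambda\alpha,\lambda\beta)\notin sim\Rightarrow\alpha\to\beta\vee\beta\to\alpha$; (CD2) $(\lambda\alpha,\lambda\beta)\notin ser\Rightarrow\alpha\to\beta\vee\beta\dashrightarrow\alpha$;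 (CD3) $\alpha\to\beta\Rightarrow(\lambda\alpha,\lambda\beta)\notin ser$; (CD4) $\alpha\dashrightarrow\beta\Rightarrow(\lambda\beta,\lambda\alpha)\notin ser$. $\mathsf{CDG}(\theta)$ is the set of these. Composition: for $D_i=[X_i,\to_i,\dashrightarrow_i,\lambda_i]$, $X_1,X_2$ disjoint, $D_1\circledcirc D_2:=[X_1\uplus X_2,\to,\dashrightarrow,\lambda_1\uplus\lambda_2]$ with $\to=\to_1\cup\to_2\cup\{(\alpha,\beta)\in X_1\times X_2:(\lambda\alpha,\lambda\beta)\notin ser\}$ and $\dashrightarrow=\dashrightarrow_1\cup\dashrightarrow_2\cup\{(\alpha,\beta)\in X_1\times X_2:(\lambda\beta,\lambda\alpha)\notin ser\}$. *)

theory Defs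
  imports Main
begin

definition rtc_on :: "'a set \<Rightarrow> ('a \<times> 'a) set \<Rightarrow> ('a \<times> 'a) set" where
  "rtc_on X R = R\<^sup>+ \<union> Id_on X"

definition so_structure :: "'a set \<Rightarrow> ('a \<times> 'a) set \<Rightarrow> ('a \<times> 'a) set \<Rightarrow> bool" where
  "so_structure X prec sqs \<longleftrightarrow>
     prec \<subseteq> X \<times> X \<and> sqs \<subseteq> X \<times> X \<and>
     (\<forall>a\<in>X. (a, a) \<notin> sqs) \<and>
     (\<forall>a\<in>X. \<forall>b\<in>X. (a, b) \<in> prec \<longrightarrow> (a, b) \<in> sqs) \<and>
     (\<forall>a\<in>X. \<forall>b\<in>X. \<forall>c\<in>X. (a, b) \<in> sqs \<and> (b, c) \<in> sqs \<and> a \<noteq> c \<longrightarrow> (a, c) \<in> sqs) \<and>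
     (\<forall>a\<in>X. \<forall>b\<in>X. \<forall>c\<in>X.
        ((a, b) \<in> sqs \<and> (b, c) \<in> prec) \<or> ((a, b) \<in> prec \<and> (b, c) \<in> sqs) \<longrightarrow> (a, c) \<in> prec)"

definition diamond_prec :: "'a set \<Rightarrow> ('a \<times> 'a) set \<Rightarrow> ('a \<times> 'a) set \<Rightarrow> ('a \<times> 'a) set" where
  "diamond_prec X R1 R2 = rtc_on X (R1 \<union> R2) O R1 O rtc_on X (R1 \<union> R2)"

definition diamond_sqs :: "'a set \<Rightarrow> ('a \<times> 'a) set \<Rightarrow> ('a \<times> 'a) set \<Rightarrow> ('a \<times> 'a) set" where
  "diamond_sqs X R1 R2 = rtc_on X (R1 \<union> R2) - Id_on X"

definition comtrace_alphabet :: "'e set \<Rightarrow> ('e \<times> 'e) set \<Rightarrow> ('e \<times> 'e) set \<Rightarrow> bool" where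
  "comtrace_alphabet E sim ser \<longleftrightarrow>
     finite E \<and> ser \<subseteq> sim \<and> sim \<subseteq> E \<times> E \<and> irrefl sim \<and> sym sim"

text \<open>A finite labeled relational structure (X, arr, dsh, lab) is (a representative of) a
  cd-graph over the comtrace alphabet (E, sim, ser).\<close>
definition is_cdg :: "'e set \<Rightarrow> ('e \<times> 'e) set \<Rightarrow> ('e \<times> 'e) set \<Rightarrow>
    'a set \<Rightarrow> ('a \<times> 'a) set \<Rightarrow> ('a \<times> 'a) set \<Rightarrow> ('a \<Rightarrow> 'e) \<Rightarrow> bool" where
  "is_cdg E sim ser X arr dsh lab \<longleftrightarrow>
     finite X \<and> arr \<subseteq> X \<times> X \<and> dsh \<subseteq> X \<times> X \<and> (\<forall>x\<in>X. lab x \<in> E) \<and>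
     (\<forall>a\<in>X. (a, a) \<notin> arr) \<and> (\<forall>a\<in>X. (a, a) \<notin> dsh) \<and>
     so_structure X (diamond_prec X arr dsh) (diamond_sqs X arr dsh) \<and>
     (\<forall>a\<in>X. \<forall>b\<in>X. a \<noteq> b \<longrightarrow>
        ((lab a, lab b) \<notin> sim \<longrightarrow> (a, b) \<in> arr \<or> (b, a) \<in> arr) \<and>
        ((lab a, lab b) \<notin> ser \<longrightarrow> (a, b) \<in> arr \<or> (b, a) \<in> dsh) \<and>
        ((a, b) \<in> arr \<longrightarrow> (lab a, lab b) \<notin> ser) \<and>
        ((a, b) \<in> dsh \<longrightarrow> (lab b, lab a) \<notin> ser))"

text \<open>Composition of representatives with disjoint carriers.\<close>
definition comp_lab :: "'a set \<Rightarrow> ('a \<Rightarrow> 'e) \<Rightarrow> ('a \<Rightarrow> 'e) \<Rightarrow> 'a \<Rightarrow> 'e" where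
  "comp_lab X1 lab1 lab2 = (\<lambda>x. if x \<in> X1 then lab1 x else lab2 x)"

definition comp_arr :: "('e \<times> 'e) set \<Rightarrow> 'a set \<Rightarrow> 'a set \<Rightarrow> ('a \<times> 'a) set \<Rightarrow> ('a \<times> 'a) set \<Rightarrow>
    ('a \<Rightarrow> 'e) \<Rightarrow> ('a \<Rightarrow> 'e) \<Rightarrow> ('a \<times> 'a) set" where
  "comp_arr ser X1 X2 arr1 arr2 lab1 lab2 =
     arr1 \<union> arr2 \<union> {(a, b). a \<in> X1 \<and> b \<in> X2 \<and> (comp_lab X1 lab1 lab2 a, comp_lab X1 lab1 lab2 b) \<notin> ser}"

definition comp_dsh :: "('e \<times> 'e) set \<Rightarrow> 'a set \<Rightarrow> 'a set \<Rightarrow> ('a \<times> 'a) set \<Rightarrow> ('a \<times> 'a) set \<Rightarrow>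
    ('a \<Rightarrow> 'e) \<Rightarrow> ('a \<Rightarrow> 'e) \<Rightarrow> ('a \<times> 'a) set" where
  "comp_dsh ser X1 X2 dsh1 dsh2 lab1 lab2 =
     dsh1 \<union> dsh2 \<union> {(a, b). a \<in> X1 \<and> b \<in> X2 \<and> (comp_lab X1 lab1 lab2 b, comp_lab X1 lab1 lab2 a) \<notin> ser}"

end

theory Submission
  imports Defs
begin

(* 1. For relations R1, R2 on X, the diamond-closure is an so-structure iff no R1-edge lies on
      a cycle of R1 \<union> R2 ("arrow-cycle-freeness"): all the so-structure axioms except
      irreflexivity of the precedence hold for every diamond-closure.
   2. In the composition every new edge goes from X1 to X2, so the edge relation is
      block-triangular; a path can never return from X2 to X1, hence every cycle lies in one
      component and consists of that component's edges.  Therefore arrow-cycle-freeness is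
      inherited from the two components.
   3. CD1-CD4 are checked pairwise: pairs inside one component are handled by that component,
      pairs across the components by the definition of the new edges (using ser \<subseteq> sim and
      the symmetry of sim). *)

lemma rtc_on_iff:
  assumes "R \<subseteq> X \<times> X"
  shows "(a, b) \<in> rtc_on X R \<longleftrightarrow> a \<in> X \<and> (a, b) \<in> R\<^sup>*"
proof
  assume "(a, b) \<in> rtc_on X R"
  then show "a \<in> X \<and> (a, b) \<in> R\<^sup>*"
    using assms trancl_subset_Sigma unfolding rtc_on_def by (blast dest: trancl_into_rtrancl)
next
  assume "a \<in> X \<and> (a, b) \<in> R\<^sup>*"
  then show "(a, b) \<in> rtc_on X R"
    unfolding rtc_on_def by (auto simp: rtrancl_eq_or_trancl)
qed

lemma diamond_prec_iff:
  assumes "R1 \<subseteq> X \<times> X" "R2 \<subseteq> X \<times> X"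
  shows "(a, c) \<in> diamond_prec X R1 R2 \<longleftrightarrow>
           a \<in> X \<and> (\<exists>d e. (a, d) \<in> (R1 \<union> R2)\<^sup>* \<and> (d, e) \<in> R1 \<and> (e, c) \<in> (R1 \<union> R2)\<^sup>*)"
proof -
  have R: "R1 \<union> R2 \<subseteq> X \<times> X" using assms by blast
  show ?thesis
    unfolding diamond_prec_def relcomp_unfold rtc_on_iff[OF R] using assms(1) by blast
qed

lemma diamond_sqs_iff:
  assumes "R1 \<subseteq> X \<times> X" "R2 \<subseteq> X \<times> X"
  shows "(a, b) \<in> diamond_sqs X R1 R2 \<longleftrightarrow> a \<in> X \<and> (a, b) \<in> (R1 \<union> R2)\<^sup>* \<and> a \<noteq> b"
proof -
  have R: "R1 \<union> R2 \<subseteq> X \<times> X" using assms by blast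
  show ?thesis unfolding diamond_sqs_def using rtc_on_iff[OF R] by auto
qed

section \<open>When the diamond-closure is an so-structure\<close>

definition arrow_cycle_free :: "('a \<times> 'a) set \<Rightarrow> ('a \<times> 'a) set \<Rightarrow> bool" where
  "arrow_cycle_free R1 R2 \<longleftrightarrow> (\<forall>b c. (b, c) \<in> R1 \<longrightarrow> (c, b) \<notin> (R1 \<union> R2)\<^sup>*)"

lemma diamond_prec_irrefl_iff:
  assumes "R1 \<subseteq> X \<times> X" "R2 \<subseteq> X \<times> X"
  shows "(\<forall>a. (a, a) \<notin> diamond_prec X R1 R2) \<longleftrightarrow> arrow_cycle_free R1 R2"
proof
  assume irrefl: "\<forall>a. (a, a) \<notin> diamond_prec X R1 R2"
  show "arrow_cycle_free R1 R2" unfolding arrow_cycle_free_def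
  proof (intro allI impI notI)
    fix b c assume "(b, c) \<in> R1" "(c, b) \<in> (R1 \<union> R2)\<^sup>*"
    moreover from \<open>(b, c) \<in> R1\<close> have "b \<in> X" using assms(1) by blast
    ultimately have "(b, b) \<in> diamond_prec X R1 R2"
      unfolding diamond_prec_iff[OF assms] by blast
    with irrefl show False by blast
  qed
next
  assume acf: "arrow_cycle_free R1 R2"
  show "\<forall>a. (a, a) \<notin> diamond_prec X R1 R2"
  proof (intro allI notI)
    fix a assume "(a, a) \<in> diamond_prec X R1 R2"
    then obtain d e where "(a, d) \<in> (R1 \<union> R2)\<^sup>*" "(d, e) \<in> R1" "(e, a) \<in> (R1 \<union> R2)\<^sup>*"
      unfolding diamond_prec_iff[OF assms] by blast
    then have "(e, d) \<in> (R1 \<union> R2)\<^sup>*" by (meson rtrancl_trans)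
    with \<open>(d, e) \<in> R1\<close> acf show False unfolding arrow_cycle_free_def by blast
  qed
qed

text \<open>Every axiom of an so-structure other than irreflexivity of the precedence holds for
  any diamond-closure; so the closure is an so-structure iff its precedence is irreflexive.\<close>
lemma so_structure_diamond_iff_irrefl:
  assumes R1: "R1 \<subseteq> X \<times> X" and R2: "R2 \<subseteq> X \<times> X"
  shows "so_structure X (diamond_prec X R1 R2) (diamond_sqs X R1 R2) \<longleftrightarrow>
           (\<forall>a. (a, a) \<notin> diamond_prec X R1 R2)"
    (is "so_structure X ?prec ?sqs \<longleftrightarrow> _")
proof
  assume "so_structure X ?prec ?sqs"
  then show "\<forall>a. (a, a) \<notin> ?prec" unfolding so_structure_def by blast
next
  assume irrefl: "\<forall>a. (a, a) \<notin> ?prec"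
  note prec = diamond_prec_iff[OF R1 R2] and sqs = diamond_sqs_iff[OF R1 R2]
  have paths_in_X: "(a, b) \<in> (R1 \<union> R2)\<^sup>* \<Longrightarrow> a \<in> X \<Longrightarrow> b \<in> X" for a b
    by (induction rule: rtrancl_induct) (use R1 R2 in blast)+
  have prec_path: "(a, c) \<in> ?prec \<Longrightarrow> a \<in> X \<and> (a, c) \<in> (R1 \<union> R2)\<^sup>*" for a c
    unfolding prec by (blast intro: rtrancl_trans)
  have path_prec: "a \<in> X \<Longrightarrow> (a, b) \<in> (R1 \<union> R2)\<^sup>* \<Longrightarrow> (b, c) \<in> ?prec \<Longrightarrow> (a, c) \<in> ?prec"
    for a b c
    unfolding prec by (blast intro: rtrancl_trans)
  have prec_path': "(a, b) \<in> ?prec \<Longrightarrow> (b, c) \<in> (R1 \<union> R2)\<^sup>* \<Longrightarrow> (a, c) \<in> ?prec" for a b c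
    unfolding prec by (blast intro: rtrancl_trans)
  show "so_structure X ?prec ?sqs" unfolding so_structure_def
  proof (intro conjI)
    show "?prec \<subseteq> X \<times> X"
    proof (rule subrelI)
      fix a c assume "(a, c) \<in> ?prec"
      with prec_path paths_in_X show "(a, c) \<in> X \<times> X" by blast
    qed
    show "?sqs \<subseteq> X \<times> X" using sqs paths_in_X by auto
    show "\<forall>a\<in>X. (a, a) \<notin> ?sqs" using sqs by auto
    show "\<forall>a\<in>X. \<forall>b\<in>X. (a, b) \<in> ?prec \<longrightarrow> (a, b) \<in> ?sqs"
      using prec_path irrefl unfolding sqs by blast
    show "\<forall>a\<in>X. \<forall>b\<in>X. \<forall>c\<in>X. (a, b) \<in> ?sqs \<and> (b, c) \<in> ?sqs \<and> a \<noteq> c \<longrightarrow> (a, c) \<in> ?sqs"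
      unfolding sqs by (blast intro: rtrancl_trans)
    show "\<forall>a\<in>X. \<forall>b\<in>X. \<forall>c\<in>X. (a, b) \<in> ?sqs \<and> (b, c) \<in> ?prec \<or> (a, b) \<in> ?prec \<and> (b, c) \<in> ?sqs
            \<longrightarrow> (a, c) \<in> ?prec"
      unfolding sqs using path_prec prec_path' by blast
  qed
qed

corollary so_structure_diamond_iff:
  assumes "R1 \<subseteq> X \<times> X" "R2 \<subseteq> X \<times> X"
  shows "so_structure X (diamond_prec X R1 R2) (diamond_sqs X R1 R2) \<longleftrightarrow> arrow_cycle_free R1 R2"
  using so_structure_diamond_iff_irrefl[OF assms] diamond_prec_irrefl_iff[OF assms] by simp

section \<open>Cycles in block-triangular graphs\<close>

lemma path_into_first_block:
  assumes S: "S \<subseteq> S1 \<union> S2 \<union> X1 \<times> X2" and S1: "S1 \<subseteq> X1 \<times> X1" and S2: "S2 \<subseteq> X2 \<times> X2"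
    and disj: "X1 \<inter> X2 = {}"
    and path: "(x, y) \<in> S\<^sup>*" and y: "y \<in> X1"
  shows "x \<in> X1 \<and> (x, y) \<in> S1\<^sup>*"
  using path y
proof (induction rule: converse_rtrancl_induct)
  case base
  then show ?case by simp
next
  case (step u v)
  then have "v \<in> X1" "(v, y) \<in> S1\<^sup>*" by simp_all
  with \<open>(u, v) \<in> S\<close> have "(u, v) \<in> S1" using S S2 disj by blast
  with \<open>(v, y) \<in> S1\<^sup>*\<close> show ?case using S1 by (blast intro: converse_rtrancl_into_rtrancl)
qed

lemma path_from_second_block:
  assumes S: "S \<subseteq> S1 \<union> S2 \<union> X1 \<times> X2" and S1: "S1 \<subseteq> X1 \<times> X1" and S2: "S2 \<subseteq> X2 \<times> X2"
    and disj: "X1 \<inter> X2 = {}"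
    and path: "(x, y) \<in> S\<^sup>*" and x: "x \<in> X2"
  shows "y \<in> X2 \<and> (x, y) \<in> S2\<^sup>*"
  using path
proof (induction rule: rtrancl_induct)
  case base
  then show ?case using x by simp
next
  case (step u v)
  then have "u \<in> X2" "(x, u) \<in> S2\<^sup>*" by simp_all
  with \<open>(u, v) \<in> S\<close> have "(u, v) \<in> S2" using S S1 disj by blast
  with \<open>(x, u) \<in> S2\<^sup>*\<close> show ?case using S2 by (blast intro: rtrancl_into_rtrancl)
qed

text \<open>Hence every cycle of a block-triangular graph lies in one block, and arrow-cycle-freeness
  passes from the two blocks to the whole graph.\<close>
lemma arrow_cycle_free_block:
  assumes A: "A \<subseteq> A1 \<union> A2 \<union> X1 \<times> X2" and D: "D \<subseteq> D1 \<union> D2 \<union> X1 \<times> X2"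
    and block1: "A1 \<union> D1 \<subseteq> X1 \<times> X1" and block2: "A2 \<union> D2 \<subseteq> X2 \<times> X2"
    and disj: "X1 \<inter> X2 = {}"
    and acf1: "arrow_cycle_free A1 D1" and acf2: "arrow_cycle_free A2 D2"
  shows "arrow_cycle_free A D"
  unfolding arrow_cycle_free_def
proof (intro allI impI notI)
  fix b c assume edge: "(b, c) \<in> A" and cycle: "(c, b) \<in> (A \<union> D)\<^sup>*"
  have S: "A \<union> D \<subseteq> (A1 \<union> D1) \<union> (A2 \<union> D2) \<union> X1 \<times> X2" using A D by blast
  show False
  proof (cases "b \<in> X1")
    case True
    with path_into_first_block[OF S block1 block2 disj cycle]
    have "c \<in> X1" "(c, b) \<in> (A1 \<union> D1)\<^sup>*" by simp_all
    moreover from \<open>c \<in> X1\<close> True edge have "(b, c) \<in> A1" using A block2 disj by blast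
    ultimately show False using acf1 unfolding arrow_cycle_free_def by blast
  next
    case False
    with edge have "(b, c) \<in> A2" using A block1 by blast
    then have "c \<in> X2" using block2 by blast
    with path_from_second_block[OF S block1 block2 disj cycle]
    have "(c, b) \<in> (A2 \<union> D2)\<^sup>*" by simp
    with \<open>(b, c) \<in> A2\<close> show False using acf2 unfolding arrow_cycle_free_def by blast
  qed
qed

definition cd_conditions :: "('e \<times> 'e) set \<Rightarrow> ('e \<times> 'e) set \<Rightarrow>
    'a set \<Rightarrow> ('a \<times> 'a) set \<Rightarrow> ('a \<times> 'a) set \<Rightarrow> ('a \<Rightarrow> 'e) \<Rightarrow> bool" where
  "cd_conditions sim ser X arr dsh lab \<longleftrightarrow>
     (\<forall>a\<in>X. \<forall>b\<in>X. a \<noteq> b \<longrightarrow>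
        ((lab a, lab b) \<notin> sim \<longrightarrow> (a, b) \<in> arr \<or> (b, a) \<in> arr) \<and>
        ((lab a, lab b) \<notin> ser \<longrightarrow> (a, b) \<in> arr \<or> (b, a) \<in> dsh) \<and>
        ((a, b) \<in> arr \<longrightarrow> (lab a, lab b) \<notin> ser) \<and>
        ((a, b) \<in> dsh \<longrightarrow> (lab b, lab a) \<notin> ser))"

lemma is_cdg_iff:
  "is_cdg E sim ser X arr dsh lab \<longleftrightarrow>
     finite X \<and> arr \<subseteq> X \<times> X \<and> dsh \<subseteq> X \<times> X \<and> (\<forall>x\<in>X. lab x \<in> E) \<and>
     (\<forall>a\<in>X. (a, a) \<notin> arr) \<and> (\<forall>a\<in>X. (a, a) \<notin> dsh) \<and>
     arrow_cycle_free arr dsh \<and> cd_conditions sim ser X arr dsh lab"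
  unfolding is_cdg_def cd_conditions_def
  by (intro conj_cong refl) (simp add: so_structure_diamond_iff)

lemma comp_lab_first [simp]: "x \<in> X1 \<Longrightarrow> comp_lab X1 lab1 lab2 x = lab1 x"
  by (simp add: comp_lab_def)

lemma comp_lab_second [simp]: "X1 \<inter> X2 = {} \<Longrightarrow> x \<in> X2 \<Longrightarrow> comp_lab X1 lab1 lab2 x = lab2 x"
  by (auto simp: comp_lab_def)

lemma comp_arr_iff:
  assumes "X1 \<inter> X2 = {}"
  shows "(a, b) \<in> comp_arr ser X1 X2 arr1 arr2 lab1 lab2 \<longleftrightarrow>
           (a, b) \<in> arr1 \<or> (a, b) \<in> arr2 \<or> (a \<in> X1 \<and> b \<in> X2 \<and> (lab1 a, lab2 b) \<notin> ser)"
  using assms by (auto simp: comp_arr_def)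

lemma comp_dsh_iff:
  assumes "X1 \<inter> X2 = {}"
  shows "(a, b) \<in> comp_dsh ser X1 X2 dsh1 dsh2 lab1 lab2 \<longleftrightarrow>
           (a, b) \<in> dsh1 \<or> (a, b) \<in> dsh2 \<or> (a \<in> X1 \<and> b \<in> X2 \<and> (lab2 b, lab1 a) \<notin> ser)"
  using assms by (auto simp: comp_dsh_def)

text \<open>CD1-CD4 for the composition: pairs inside a component are inherited, pairs across the
  components are settled by the new edges, using ser \<subseteq> sim and the symmetry of sim.\<close>
lemma comp_cd_conditions:
  assumes ser_sim: "ser \<subseteq> sim" and sym_sim: "sym sim" and disj: "X1 \<inter> X2 = {}"
    and block1: "arr1 \<union> dsh1 \<subseteq> X1 \<times> X1" and block2: "arr2 \<union> dsh2 \<subseteq> X2 \<times> X2"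
    and cd1: "cd_conditions sim ser X1 arr1 dsh1 lab1"
    and cd2: "cd_conditions sim ser X2 arr2 dsh2 lab2"
  shows "cd_conditions sim ser (X1 \<union> X2) (comp_arr ser X1 X2 arr1 arr2 lab1 lab2)
           (comp_dsh ser X1 X2 dsh1 dsh2 lab1 lab2) (comp_lab X1 lab1 lab2)"
  unfolding cd_conditions_def
proof (intro ballI impI)
  let ?A = "comp_arr ser X1 X2 arr1 arr2 lab1 lab2" and ?D = "comp_dsh ser X1 X2 dsh1 dsh2 lab1 lab2"
    and ?l = "comp_lab X1 lab1 lab2"
  fix a b assume "a \<in> X1 \<union> X2" "b \<in> X1 \<union> X2" "a \<noteq> b"
  then consider "a \<in> X1" "b \<in> X1" | "a \<in> X1" "b \<in> X2" | "a \<in> X2" "b \<in> X1" | "a \<in> X2" "b \<in> X2"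
    by blast
  then show "((?l a, ?l b) \<notin> sim \<longrightarrow> (a, b) \<in> ?A \<or> (b, a) \<in> ?A) \<and>
      ((?l a, ?l b) \<notin> ser \<longrightarrow> (a, b) \<in> ?A \<or> (b, a) \<in> ?D) \<and>
      ((a, b) \<in> ?A \<longrightarrow> (?l a, ?l b) \<notin> ser) \<and>
      ((a, b) \<in> ?D \<longrightarrow> (?l b, ?l a) \<notin> ser)"
  proof cases
    case 1
    with cd1 \<open>a \<noteq> b\<close> block2 show ?thesis
      unfolding cd_conditions_def comp_arr_iff[OF disj] comp_dsh_iff[OF disj] using disj by auto
  next
    case 2
    with block1 block2 ser_sim show ?thesis
      unfolding comp_arr_iff[OF disj] comp_dsh_iff[OF disj] using disj by auto
  next
    case 3
    with block1 block2 ser_sim sym_sim show ?thesis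
      unfolding comp_arr_iff[OF disj] comp_dsh_iff[OF disj] using disj by (auto dest: symD)
  next
    case 4
    with cd2 \<open>a \<noteq> b\<close> block1 show ?thesis
      unfolding cd_conditions_def comp_arr_iff[OF disj] comp_dsh_iff[OF disj] using disj by auto
  qed
qed

theorem mainTheorem16:
  fixes E :: "'e set" and sim ser :: "('e \<times> 'e) set"
    and X1 X2 :: "'a set" and arr1 dsh1 arr2 dsh2 :: "('a \<times> 'a) set"
    and lab1 lab2 :: "'a \<Rightarrow> 'e"
  assumes "comtrace_alphabet E sim ser"
    and "is_cdg E sim ser X1 arr1 dsh1 lab1"
    and "is_cdg E sim ser X2 arr2 dsh2 lab2"
    and "X1 \<inter> X2 = {}"
  shows "is_cdg E sim ser (X1 \<union> X2)
           (comp_arr ser X1 X2 arr1 arr2 lab1 lab2)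
           (comp_dsh ser X1 X2 dsh1 dsh2 lab1 lab2)
           (comp_lab X1 lab1 lab2)"
proof -
  note disj = assms(4)
  have ser_sim: "ser \<subseteq> sim" and sym_sim: "sym sim"
    using assms(1) unfolding comtrace_alphabet_def by simp_all
  from assms(2) have fin1: "finite X1" and block1: "arr1 \<union> dsh1 \<subseteq> X1 \<times> X1"
    and E1: "\<forall>x\<in>X1. lab1 x \<in> E" and loops1: "\<forall>a\<in>X1. (a, a) \<notin> arr1 \<and> (a, a) \<notin> dsh1"
    and acf1: "arrow_cycle_free arr1 dsh1" and cd1: "cd_conditions sim ser X1 arr1 dsh1 lab1"
    unfolding is_cdg_iff by blast+
  from assms(3) have fin2: "finite X2" and block2: "arr2 \<union> dsh2 \<subseteq> X2 \<times> X2"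
    and E2: "\<forall>x\<in>X2. lab2 x \<in> E" and loops2: "\<forall>a\<in>X2. (a, a) \<notin> arr2 \<and> (a, a) \<notin> dsh2"
    and acf2: "arrow_cycle_free arr2 dsh2" and cd2: "cd_conditions sim ser X2 arr2 dsh2 lab2"
    unfolding is_cdg_iff by blast+
  have "arrow_cycle_free (comp_arr ser X1 X2 arr1 arr2 lab1 lab2)
                         (comp_dsh ser X1 X2 dsh1 dsh2 lab1 lab2)"
    by (rule arrow_cycle_free_block[OF _ _ block1 block2 disj acf1 acf2])
       (auto simp: comp_arr_def comp_dsh_def)
  moreover have "cd_conditions sim ser (X1 \<union> X2) (comp_arr ser X1 X2 arr1 arr2 lab1 lab2)
                   (comp_dsh ser X1 X2 dsh1 dsh2 lab1 lab2) (comp_lab X1 lab1 lab2)"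
    by (rule comp_cd_conditions[OF ser_sim sym_sim disj block1 block2 cd1 cd2])
  moreover have "comp_arr ser X1 X2 arr1 arr2 lab1 lab2 \<subseteq> (X1 \<union> X2) \<times> (X1 \<union> X2)"
    and "comp_dsh ser X1 X2 dsh1 dsh2 lab1 lab2 \<subseteq> (X1 \<union> X2) \<times> (X1 \<union> X2)"
    using block1 block2 by (auto simp: comp_arr_def comp_dsh_def)
  moreover have "\<forall>a\<in>X1 \<union> X2. (a, a) \<notin> comp_arr ser X1 X2 arr1 arr2 lab1 lab2"
    and "\<forall>a\<in>X1 \<union> X2. (a, a) \<notin> comp_dsh ser X1 X2 dsh1 dsh2 lab1 lab2"
    using loops1 loops2 block1 block2 disj by (auto simp: comp_arr_iff comp_dsh_iff)
  moreover have "\<forall>x\<in>X1 \<union> X2. comp_lab X1 lab1 lab2 x \<in> E"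
    using E1 E2 disj by auto
  ultimately show ?thesis
    unfolding is_cdg_iff using fin1 fin2 by blast
qed

end
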